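(* Let $a$ be a complex number of modulus one and let $H$ be a $6\times 6$ complex Hadamard matrix all of whose entries lie in $\{1,a,-a\}$. Then $H$ is complex equivalent to $$H^{(1)}=\begin{bmatrix} i&1&1&1&1&1\\ 1&i&1&1&-1&-1\\ 1&1&i&-1&1&-1\\ 1&1&-1&i&-1&1\\ 1&-1&1&-1&i&1\\ 1&-1&-1&1&1&i \end{bmatrix}.$$
   Context: A complex Hadamard matrix (CHM) of order $n$ is an $n\times n$ complex matrix $H$ all of whose entries have modulus one and which satisfies $HH^\dagger=nI$. A monomial unitary matrix is a unitary matrix each of whose rows and columns has exactly one nonzero entry, that entry having modulus one. Two $n\times n$ matrices $U,V$ are complex equivalent if $U=PVQ$ for some $n\times n$ monomial unitary matrices $P,Q$. *)

theory Defs
  imports "HOL-Analysis.Analysis"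
begin

definition conj_transpose :: "complex^'n^'m \<Rightarrow> complex^'m^'n" where
  "conj_transpose A = (\<chi> i j. cnj (A $ j $ i))"

definition complex_hadamard :: "complex^'n^'n \<Rightarrow> bool" where
  "complex_hadamard H \<longleftrightarrow>
     (\<forall>i j. norm (H $ i $ j) = 1) \<and>
     H ** conj_transpose H = of_nat CARD('n) *\<^sub>R mat 1"

definition monomial_unitary :: "complex^'n^'n \<Rightarrow> bool" where
  "monomial_unitary P \<longleftrightarrow>
     (\<forall>i. \<exists>!j. P $ i $ j \<noteq> 0) \<and>
     (\<forall>j. \<exists>!i. P $ i $ j \<noteq> 0) \<and>
     (\<forall>i j. P $ i $ j \<noteq> 0 \<longrightarrow> norm (P $ i $ j) = 1)"

definition complex_equivalent :: "complex^'n^'n \<Rightarrow> complex^'n^'n \<Rightarrow> bool" where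
  "complex_equivalent U V \<longleftrightarrow>
     (\<exists>P Q. monomial_unitary P \<and> monomial_unitary Q \<and> U = P ** V ** Q)"

definition H1_list :: "complex list list" where
  "H1_list =
    [[\<i>, 1, 1, 1, 1, 1],
     [1, \<i>, 1, 1, -1, -1],
     [1, 1, \<i>, -1, 1, -1],
     [1, 1, -1, \<i>, -1, 1],
     [1, -1, 1, -1, \<i>, 1],
     [1, -1, -1, 1, 1, \<i>]]"

definition H1 :: "complex^6^6" where
  "H1 = (\<chi> i j. H1_list ! (nat (Rep_bit0 i)) ! (nat (Rep_bit0 j)))"

end

theory Submission
  imports Defs
begin

text \<open>
  Encode the entries \<open>1, a, -a\<close> by letters. For real \<open>a\<close> the matrix would be a real Hadamard
  matrix of order 6, impossible since 4 does not divide 6. Otherwise the inner product of two rows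
  (or columns) is \<open>A + a B + cnj a C\<close> with integers determined by the letter patterns, so
  orthogonality gives \<open>B = C\<close> and \<open>A + 2 Re a B = 0\<close>; together with \<open>\<bar>A\<bar> + 2\<bar>B\<bar> \<le> 6\<close> and
  \<open>A\<close> even this forces \<open>A = -B\<close> if \<open>Re a = 1/2\<close>, \<open>A = 0\<close> if \<open>Re a = 0\<close>, and \<open>A = B = C = 0\<close>
  unless \<open>Re a \<in> {0, \<plusminus>1/2}\<close>. Replacing \<open>a\<close> by \<open>-a\<close> we may assume \<open>Re a > 0\<close> or \<open>a = \<i>\<close>.
  Permuting rows and columns into lexicographic normal form, an exhaustive search shows that no
  pattern satisfies \<open>A = -B\<close> for all pairs (which also rules out \<open>A = B = C = 0\<close>), so \<open>a = \<i>\<close>;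
  the search then leaves twenty patterns with \<open>A = 0\<close>, each of which is matched with \<open>H1\<close>
  by explicit permutations and unimodular scalings.
\<close>

definition enum6 :: "6 list" where
  "enum6 = [0, 1, 2, 3, 4, 5]"

definition index6 :: "6 \<Rightarrow> nat" where
  "index6 u = nat (Rep_bit0 u)"

lemma map_Rep_bit0_enum6: "map Rep_bit0 enum6 = [0, 1, 2, 3, 4, 5]"
  by (simp add: enum6_def bit0.Rep_numeral bit0.Rep_0 bit0.Rep_1)

lemma length_enum6 [simp]: "length enum6 = 6"
  by (simp add: enum6_def)

lemma distinct_enum6: "distinct enum6"
proof -
  have "distinct (map Rep_bit0 enum6)"
    by (simp add: map_Rep_bit0_enum6)
  then show ?thesis
    by (simp add: distinct_map)
qed

lemma set_enum6: "set enum6 = UNIV"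
proof -
  have "card (set enum6) = CARD(6)"
    using distinct_enum6 by (simp add: distinct_card)
  then show ?thesis
    by (simp add: card_eq_UNIV_imp_eq_UNIV)
qed

lemma index6_enum6 [simp]: "k < 6 \<Longrightarrow> index6 (enum6 ! k) = k"
proof -
  assume k: "k < 6"
  then have "Rep_bit0 (enum6 ! k) = [0, 1, 2, 3, 4, 5] ! k"
    by (metis length_enum6 map_Rep_bit0_enum6 nth_map)
  with k show ?thesis
    by (auto simp: index6_def less_Suc_eq numeral_eq_Suc)
qed

lemma enum6_cases:
  obtains k where "k < 6" "u = enum6 ! k"
  by (metis UNIV_I in_set_conv_nth length_enum6 set_enum6)

lemma index6_less: "index6 u < 6"
  by (metis enum6_cases index6_enum6)

lemma enum6_index6 [simp]: "enum6 ! index6 u = u"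
  by (metis enum6_cases index6_enum6)

lemma enum6_eq_iff: "k < 6 \<Longrightarrow> l < 6 \<Longrightarrow> enum6 ! k = enum6 ! l \<longleftrightarrow> k = l"
  by (metis index6_enum6)

lemma sum_UNIV_6: "(\<Sum>u\<in>UNIV. f u) = sum_list (map f enum6)"
  by (metis distinct_enum6 set_enum6 sum_list_distinct_conv_sum_set)

lemma H1_index6: "H1 $ u $ v = H1_list ! index6 u ! index6 v"
  by (simp add: H1_def index6_def)

section \<open>Orthogonality in complex Hadamard matrices\<close>

lemma complex_hadamard_rows_orthogonal:
  assumes "complex_hadamard (H :: complex^'n^'n)" "u \<noteq> v"
  shows "(\<Sum>j\<in>UNIV. H $ u $ j * cnj (H $ v $ j)) = 0"
proof -
  have "(H ** conj_transpose H) $ u $ v = (of_nat CARD('n) *\<^sub>R mat 1 :: complex^'n^'n) $ u $ v"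
    using assms(1) by (simp add: complex_hadamard_def)
  with assms(2) show ?thesis
    by (simp add: matrix_matrix_mult_def conj_transpose_def mat_def)
qed

lemma complex_hadamard_columns_orthogonal:
  assumes "complex_hadamard (H :: complex^'n^'n)" "u \<noteq> v"
  shows "(\<Sum>i\<in>UNIV. H $ i $ u * cnj (H $ i $ v)) = 0"
proof -
  define c where "c = real CARD('n)"
  have c: "c \<noteq> 0"
    by (simp add: c_def)
  have "H ** ((1 / c) *\<^sub>R conj_transpose H) = (1 / c) *\<^sub>R (H ** conj_transpose H)"
    by (metis matrix_scalar_ac scalar_matrix_assoc)
  also have "\<dots> = mat 1"
    using assms(1) c by (simp add: complex_hadamard_def c_def)
  finally have "((1 / c) *\<^sub>R conj_transpose H) ** H = mat 1"
    using matrix_left_right_inverse by blast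
  then have "(((1 / c) *\<^sub>R conj_transpose H) ** H) $ v $ u = 0"
    using assms(2) by (simp add: mat_def)
  then have "(1 / c) *\<^sub>R (\<Sum>i\<in>UNIV. cnj (H $ i $ v) * H $ i $ u) = 0"
    by (simp add: matrix_matrix_mult_def conj_transpose_def scaleR_sum_right)
  with c show ?thesis
    by (simp add: mult.commute)
qed

text \<open>The classical three-row argument: for rows \<open>x, y, z\<close> with entries \<open>\<plusminus>1\<close> the numbers
  \<open>(1 + x\<^sub>j y\<^sub>j)(1 + x\<^sub>j z\<^sub>j)\<close> are \<open>0\<close> or \<open>4\<close>, and by orthogonality they sum to the order.\<close>

lemma real_hadamard_order_dvd:
  fixes H :: "complex^'n^'n"
  assumes hadamard: "complex_hadamard H" and entries: "\<forall>i j. H $ i $ j \<in> {1, -1}"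
    and order: "CARD('n) \<ge> 3"
  shows "4 dvd CARD('n)"
proof -
  obtain S :: "'n set" where "card S = 3"
    using obtain_subset_with_card_n[OF order] by blast
  then obtain x y z :: 'n where xyz: "x \<noteq> y" "x \<noteq> z" "y \<noteq> z"
    unfolding card_3_iff by blast
  have real: "cnj (H $ i $ j) = H $ i $ j" for i j
    using entries by (metis Reals_cnj_iff Reals_1 Reals_minus insert_iff singletonD)
  have orth: "(\<Sum>j\<in>UNIV. H $ u $ j * H $ v $ j) = 0" if "u \<noteq> v" for u v
    using complex_hadamard_rows_orthogonal[OF hadamard that] by (simp add: real)
  define g where
    "g j = (if H $ x $ j * H $ y $ j = 1 \<and> H $ x $ j * H $ z $ j = 1 then 4 else 0 :: nat)" for j
  have g_eq: "of_nat (g j) = 1 + H $ x $ j * H $ y $ j + H $ x $ j * H $ z $ j + H $ y $ j * H $ z $ j"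
    for j
    using entries[rule_format, of x j] entries[rule_format, of y j] entries[rule_format, of z j]
    by (auto simp: g_def)
  have "(of_nat (\<Sum>j\<in>UNIV. g j) :: complex) = of_nat CARD('n)"
    using orth[OF xyz(1)] orth[OF xyz(2)] orth[OF xyz(3)]
    by (simp add: g_eq sum.distrib)
  then have "(\<Sum>j\<in>UNIV. g j) = CARD('n)"
    using of_nat_eq_iff by blast
  moreover have "4 dvd (\<Sum>j\<in>UNIV. g j)"
    by (rule dvd_sum) (simp add: g_def)
  ultimately show ?thesis
    by simp
qed

section \<open>Letter patterns\<close>

datatype letter = Z | P | N

instantiation letter :: linorder
begin

fun less_eq_letter :: "letter \<Rightarrow> letter \<Rightarrow> bool" where
  "less_eq_letter Z y \<longleftrightarrow> True"
| "less_eq_letter P y \<longleftrightarrow> y \<noteq> Z"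
| "less_eq_letter N y \<longleftrightarrow> y = N"

definition less_letter :: "letter \<Rightarrow> letter \<Rightarrow> bool" where
  "less_letter x y \<longleftrightarrow> x \<le> y \<and> \<not> y \<le> x"

instance
proof
  fix x y z :: letter
  show "x \<le> x" by (cases x) simp_all
  show "x \<le> y \<Longrightarrow> y \<le> z \<Longrightarrow> x \<le> z" by (cases x; cases y; cases z) simp_all
  show "x \<le> y \<Longrightarrow> y \<le> x \<Longrightarrow> x = y" by (cases x; cases y) simp_all
  show "x \<le> y \<or> y \<le> x" by (cases x; cases y) simp_all
qed (simp add: less_letter_def)

end

definition letter_val :: "complex \<Rightarrow> letter \<Rightarrow> complex" where
  "letter_val a x = (case x of Z \<Rightarrow> 1 | P \<Rightarrow> a | N \<Rightarrow> -a)"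

definition letter_of :: "complex \<Rightarrow> complex \<Rightarrow> letter" where
  "letter_of a z = (if z = 1 then Z else if z = a then P else N)"

lemma letter_val_simps [simp]: "letter_val a Z = 1" "letter_val a P = a" "letter_val a N = -a"
  by (simp_all add: letter_val_def)

lemma letter_val_of: "z \<in> {1, a, -a} \<Longrightarrow> a \<noteq> 1 \<Longrightarrow> letter_val a (letter_of a z) = z"
  by (auto simp: letter_of_def)

fun letter_sign :: "letter \<Rightarrow> int" where
  "letter_sign N = -1"
| "letter_sign _ = 1"

text \<open>For \<open>norm a = 1\<close> the inner product of two words is \<open>A + a B + cnj a C\<close>:
  positions with both or neither letter \<open>Z\<close> contribute \<open>\<plusminus>1\<close> to \<open>A\<close>, the others \<open>\<plusminus>a\<close> to \<open>B\<close>
  or \<open>\<plusminus>cnj a\<close> to \<open>C\<close>.\<close>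

fun inner_coeffs :: "letter list \<Rightarrow> letter list \<Rightarrow> int \<times> int \<times> int" where
  "inner_coeffs (x # xs) (y # ys) = (case inner_coeffs xs ys of (A, B, C) \<Rightarrow>
      if (x = Z) = (y = Z) then (A + letter_sign x * letter_sign y, B, C)
      else if y = Z then (A, B + letter_sign x, C)
      else (A, B, C + letter_sign y))"
| "inner_coeffs _ _ = (0, 0, 0)"

lemma inner_product_letter_val:
  assumes "length xs = length ys" and unit: "a * cnj a = 1"
  shows "(\<Sum>(x, y)\<leftarrow>zip xs ys. letter_val a x * cnj (letter_val a y))
     = (case inner_coeffs xs ys of (A, B, C) \<Rightarrow> of_int A + a * of_int B + cnj a * of_int C)"
  using assms(1)
proof (induction xs ys rule: list_induct2)
  case (Cons x xs y ys)
  obtain A B C where "inner_coeffs xs ys = (A, B, C)"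
    by (cases "inner_coeffs xs ys")
  moreover have "cnj a * a = 1"
    using unit by (simp add: mult.commute)
  ultimately show ?case
    using Cons.IH unit
    by (cases x; cases y) (simp_all add: algebra_simps)
qed simp

lemma unit_step_bound:
  fixes A B C n d :: int
  assumes "\<bar>A\<bar> + \<bar>B\<bar> + \<bar>C\<bar> \<le> n" "even (A + B + C + n)" "\<bar>d\<bar> = 1"
  shows "\<bar>A + d\<bar> + \<bar>B\<bar> + \<bar>C\<bar> \<le> n + 1" "even (A + d + B + C + (n + 1))"
proof -
  have "d = 1 \<or> d = -1"
    using assms(3) by linarith
  then show "\<bar>A + d\<bar> + \<bar>B\<bar> + \<bar>C\<bar> \<le> n + 1" "even (A + d + B + C + (n + 1))"
    using assms(1,2) by auto
qed

lemma inner_coeffs_bound: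
  "length xs = length ys \<Longrightarrow> inner_coeffs xs ys = (A, B, C) \<Longrightarrow>
    \<bar>A\<bar> + \<bar>B\<bar> + \<bar>C\<bar> \<le> int (length xs) \<and> even (A + B + C + int (length xs))"
proof (induction xs ys arbitrary: A B C rule: list_induct2)
  case (Cons x xs y ys)
  obtain A' B' C' where IH: "inner_coeffs xs ys = (A', B', C')"
    by (cases "inner_coeffs xs ys")
  with Cons.IH have bound: "\<bar>A'\<bar> + \<bar>B'\<bar> + \<bar>C'\<bar> \<le> int (length xs)"
    and parity: "even (A' + B' + C' + int (length xs))"
    by blast+
  have sign: "\<bar>letter_sign u\<bar> = 1" "\<bar>letter_sign u * letter_sign v\<bar> = 1" for u v
    by (cases u; cases v; simp)+
  note A_step = unit_step_bound[OF bound parity]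
    and B_step = unit_step_bound[of B' A' C' "int (length xs)", OF _ _ sign(1)]
    and C_step = unit_step_bound[of C' B' A' "int (length xs)", OF _ _ sign(1)]
  consider "(x = Z) = (y = Z)" | "x \<noteq> Z" "y = Z" | "x = Z" "y \<noteq> Z"
    by blast
  then show ?case
  proof cases
    case 1
    with Cons.prems IH have "(A, B, C) = (A' + letter_sign x * letter_sign y, B', C')"
      by simp
    with A_step[OF sign(2)] show ?thesis
      by (simp add: ac_simps)
  next
    case 2
    with Cons.prems IH have "(A, B, C) = (A', B' + letter_sign x, C')"
      by simp
    with B_step[of x] bound parity show ?thesis
      by (simp add: ac_simps)
  next
    case 3
    with Cons.prems IH have "(A, B, C) = (A', B', C' + letter_sign y)"
      by simp
    with C_step[of y] bound parity show ?thesis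
      by (simp add: ac_simps)
  qed
qed simp

lemma inner_coeffs_self: "inner_coeffs xs xs = (int (length xs), 0, 0)"
proof (induction xs)
  case (Cons x xs)
  then show ?case
    by (cases x) simp_all
qed simp

lemma coeffs_relation_nonreal:
  assumes "of_int A + a * of_int B + cnj a * of_int C = (0 :: complex)" "Im a \<noteq> 0"
  shows "B = C" "real_of_int A + 2 * Re a * real_of_int B = 0"
proof -
  have "Im a * (real_of_int B - real_of_int C) = 0"
    using arg_cong[OF assms(1), of Im] by (simp add: algebra_simps)
  with assms(2) show "B = C"
    by simp
  with arg_cong[OF assms(1), of Re] show "real_of_int A + 2 * Re a * real_of_int B = 0"
    by simp
qed

definition slope :: "real \<Rightarrow> int" where
  "slope x = (if x = -1/2 then 1 else if x = 1/2 then -1 else 0)"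

lemma small_relation_slope:
  fixes A B :: int
  assumes bound: "\<bar>A\<bar> + 2 * \<bar>B\<bar> \<le> 6" and "even A"
    and rel: "real_of_int A + 2 * x * real_of_int B = 0" and x: "\<bar>x\<bar> < 1"
  shows "A = slope x * B" "x \<notin> {0, 1/2, -1/2} \<Longrightarrow> B = 0"
proof -
  have "A = 0 \<or> (\<bar>A\<bar> = 2 \<and> \<bar>B\<bar> = 2)"
  proof (cases "B = 0")
    case False
    have "\<bar>real_of_int A\<bar> = 2 * \<bar>x\<bar> * \<bar>real_of_int B\<bar>"
      using rel by (metis abs_minus_cancel abs_mult abs_numeral add_eq_0_iff mult.assoc)
    also have "\<dots> < 2 * \<bar>real_of_int B\<bar>"
      using x False by simp
    finally have "\<bar>A\<bar> < 2 * \<bar>B\<bar>"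
      by linarith
    with bound \<open>even A\<close> show ?thesis
      by (auto elim!: evenE simp: abs_mult)
  qed (use rel in simp)
  then have "A = 0 \<or> (A = 2 \<and> B = 2) \<or> (A = 2 \<and> B = -2) \<or> (A = -2 \<and> B = 2) \<or> (A = -2 \<and> B = -2)"
    by (auto simp: abs_if split: if_splits)
  with rel show "A = slope x * B" "x \<notin> {0, 1/2, -1/2} \<Longrightarrow> B = 0"
    by (auto simp: slope_def)
qed

definition orth_pattern :: "int \<Rightarrow> letter list \<Rightarrow> letter list \<Rightarrow> bool" where
  "orth_pattern m r s \<longleftrightarrow> (case inner_coeffs r s of (A, B, C) \<Rightarrow> B = C \<and> A = m * B)"

lemma not_orth_pattern_self: "r \<noteq> [] \<Longrightarrow> \<not> orth_pattern m r r"
  by (simp add: orth_pattern_def inner_coeffs_self)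

lemma orth_pattern_of_orthogonal:
  assumes orth: "(\<Sum>(x, y)\<leftarrow>zip r s. letter_val a x * cnj (letter_val a y)) = 0"
    and length: "length r = 6" "length s = 6"
    and a: "norm a = 1" "Im a \<noteq> 0"
    and m: "m = slope (Re a) \<or> Re a \<notin> {0, 1/2, -1/2}"
  shows "orth_pattern m r s"
proof -
  obtain A B C where coeffs: "inner_coeffs r s = (A, B, C)"
    by (cases "inner_coeffs r s")
  have "a * cnj a = 1"
    using a(1) by (simp add: complex_norm_square[symmetric])
  with orth length coeffs have "of_int A + a * of_int B + cnj a * of_int C = (0 :: complex)"
    using inner_product_letter_val[of r s a] by simp
  note rel = coeffs_relation_nonreal[OF this a(2)]
  have "\<bar>A\<bar> + \<bar>B\<bar> + \<bar>C\<bar> \<le> 6" "even (A + B + C + 6)"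
    using inner_coeffs_bound[OF _ coeffs] length by auto
  with rel(1) have "\<bar>A\<bar> + 2 * \<bar>B\<bar> \<le> 6" "even A"
    by auto
  moreover have "\<bar>Re a\<bar> < 1"
  proof -
    have "(Re a)\<^sup>2 + (Im a)\<^sup>2 = 1"
      using a(1) by (simp add: cmod_def)
    with a(2) have "(Re a)\<^sup>2 < 1"
      by (smt (verit) zero_less_power2)
    then show ?thesis
      by (simp add: abs_square_less_1)
  qed
  note slope = small_relation_slope[OF calculation rel(2) this]
  show ?thesis
    using m coeffs rel(1) slope by (auto simp: orth_pattern_def)
qed

section \<open>Exhaustive search for normal forms\<close>

lemma lexordp_same_length_iff:
  fixes xs ys :: "'a :: linorder list"
  assumes "length xs = length ys"
  shows "ord_class.lexordp xs ys \<longleftrightarrow> (\<exists>i < length xs. (\<forall>k < i. xs ! k = ys ! k) \<and> xs ! i < ys ! i)"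
proof -
  have take: "take i xs = take i ys \<longleftrightarrow> (\<forall>k < i. xs ! k = ys ! k)" if "i < length xs" for i
    using that assms by (auto simp: list_eq_iff_nth_eq)
  show ?thesis
    using assms by (auto simp: lexordp_conv_lexord lexord_take_index_conv take)
qed

abbreviation lex_less :: "letter list \<Rightarrow> letter list \<Rightarrow> bool" where
  "lex_less \<equiv> ord_class.lexordp"

lemma lexordp_take_imp:
  fixes xs ys :: "'a :: linorder list"
  assumes "length xs = length ys" "ord_class.lexordp (take n xs) (take n ys)"
  shows "ord_class.lexordp xs ys"
  using assms by (auto simp: lexordp_same_length_iff)

definition column :: "nat \<Rightarrow> letter list list \<Rightarrow> letter list" where
  "column j M = map (\<lambda>r. r ! j) M"

definition columns_sorted :: "letter list list \<Rightarrow> bool" where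
  "columns_sorted M \<longleftrightarrow> (\<forall>j < 5. \<not> lex_less (column (Suc j) M) (column j M))"

definition columns_orthogonal :: "int \<Rightarrow> letter list list \<Rightarrow> bool" where
  "columns_orthogonal m M \<longleftrightarrow>
     (\<forall>j k. j < k \<longrightarrow> k < 6 \<longrightarrow> orth_pattern m (column j M) (column k M))"

lemma columns_sorted_code [code]:
  "columns_sorted M \<longleftrightarrow> list_all (\<lambda>j. \<not> lex_less (column (Suc j) M) (column j M)) [0, 1, 2, 3, 4]"
proof -
  have upt5: "[0..<5] = [0, 1, 2, 3, 4 :: nat]"
    by (simp add: upt_rec)
  show ?thesis
    unfolding columns_sorted_def list_all_iff upt5[symmetric] by auto
qed

definition index_pairs :: "(nat \<times> nat) list" where
  "index_pairs = [(j, k). k \<leftarrow> [0..<6], j \<leftarrow> [0..<k]]"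

lemma set_index_pairs: "set index_pairs = {(j, k). j < k \<and> k < 6}"
  by (auto simp: index_pairs_def)

lemma index_pairs_code [code]:
  "index_pairs = [(0, 1), (0, 2), (1, 2), (0, 3), (1, 3), (2, 3), (0, 4), (1, 4), (2, 4), (3, 4),
     (0, 5), (1, 5), (2, 5), (3, 5), (4, 5)]"
  by (simp add: index_pairs_def upt_rec)

lemma columns_orthogonal_code [code]:
  "columns_orthogonal m M \<longleftrightarrow> list_all (\<lambda>(j, k). orth_pattern m (column j M) (column k M)) index_pairs"
  by (auto simp: columns_orthogonal_def list_all_iff set_index_pairs)

definition compatible :: "int \<Rightarrow> letter list \<Rightarrow> letter list \<Rightarrow> bool" where
  "compatible m r s \<longleftrightarrow> lex_less r s \<and> orth_pattern m r s"

definition normal_form :: "int \<Rightarrow> letter list list \<Rightarrow> bool" where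
  "normal_form m R \<longleftrightarrow> length R = 6 \<and> (\<forall>i < 6. length (R ! i) = 6) \<and>
     (\<forall>i j. i < j \<longrightarrow> j < 6 \<longrightarrow> compatible m (R ! i) (R ! j)) \<and>
     columns_sorted R \<and> columns_orthogonal m R"

fun words :: "nat \<Rightarrow> letter list list" where
  "words 0 = [[]]"
| "words (Suc n) = concat (map (\<lambda>x. map ((#) x) (words n)) [Z, P, N])"

lemma set_words: "set (words n) = {xs. length xs = n}"
proof (induction n)
  case (Suc n)
  have "xs \<in> set (words (Suc n)) \<longleftrightarrow> length xs = Suc n" for xs
  proof (cases xs)
    case (Cons y ys)
    with Suc show ?thesis
      by (cases y) auto
  qed auto
  then show ?case
    by blast
qed simp

fun extend :: "int \<Rightarrow> nat \<Rightarrow> letter list list \<Rightarrow> letter list list \<Rightarrow> letter list list list" where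
  "extend m 0 M cs = (if columns_orthogonal m M then [M] else [])"
| "extend m (Suc n) M cs = concat (map (\<lambda>s. if columns_sorted (M @ [s])
      then extend m n (M @ [s]) (filter (compatible m s) cs) else []) cs)"

text \<open>The first row of a normal form is sorted because its columns are.\<close>

definition search :: "int \<Rightarrow> letter list list list" where
  "search m = concat (map (\<lambda>r. extend m 5 [r] (filter (compatible m r) (words 6)))
     (filter sorted (words 6)))"

lemma column_take: "column j (take k R) = take k (column j R)"
  by (simp add: column_def take_map)

lemma columns_sorted_take:
  assumes "columns_sorted R"
  shows "columns_sorted (take k R)"
proof -
  have "length (column j R) = length (column j' R)" for j j'
    by (simp add: column_def)
  with assms lexordp_take_imp show ?thesis
    unfolding columns_sorted_def column_take by blast
qed

lemma extend_complete:
  assumes R: "normal_form m R"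
  shows "length M + n = 6 \<Longrightarrow> 0 < length M \<Longrightarrow> M = take (length M) R \<Longrightarrow>
    (\<forall>j. length M \<le> j \<longrightarrow> j < 6 \<longrightarrow> R ! j \<in> set cs) \<Longrightarrow> R \<in> set (extend m n M cs)"
proof (induction n arbitrary: M cs)
  case 0
  with R show ?case
    by (simp add: normal_form_def)
next
  case (Suc n)
  define s where "s = R ! length M"
  have "length M < 6"
    using Suc.prems(1) by simp
  then have s: "s \<in> set cs"
    using Suc.prems(4) by (simp add: s_def)
  have Ms: "M @ [s] = take (length (M @ [s])) R"
    using Suc.prems(3) R \<open>length M < 6\<close>
    by (metis length_append_singleton normal_form_def s_def take_Suc_conv_app_nth)
  have "R \<in> set (extend m n (M @ [s]) (filter (compatible m s) cs))"
    using Suc.prems(1,4) R Ms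
    by (intro Suc.IH) (auto simp: normal_form_def s_def)
  moreover have "columns_sorted (M @ [s])"
    using Ms R by (metis columns_sorted_take normal_form_def)
  ultimately show ?case
    using s by auto
qed

lemma sorted_first_row:
  assumes "columns_sorted R" "R \<noteq> []" "length (R ! 0) = 6"
  shows "sorted (R ! 0)"
proof -
  have "R ! 0 ! j \<le> R ! 0 ! Suc j" if "j < 5" for j
  proof (rule ccontr)
    assume "\<not> R ! 0 ! j \<le> R ! 0 ! Suc j"
    then have "lex_less (column (Suc j) R) (column j R)"
      using assms(2) by (cases R) (auto simp: column_def)
    with assms(1) that show False
      by (simp add: columns_sorted_def)
  qed
  with assms(3) show ?thesis
    by (auto simp: sorted_iff_nth_Suc)
qed

lemma normal_form_in_search:
  assumes R: "normal_form m R"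
  shows "R \<in> set (search m)"
proof -
  have "R \<noteq> []"
    using R by (auto simp: normal_form_def)
  then have first: "R ! 0 \<in> set (filter sorted (words 6))"
    using R sorted_first_row[of R] by (auto simp: normal_form_def set_words)
  have "R \<in> set (extend m 5 [R ! 0] (filter (compatible m (R ! 0)) (words 6)))"
    using R by (intro extend_complete) (auto simp: normal_form_def set_words take_Suc_conv_app_nth)
  with first show ?thesis
    by (auto simp: search_def)
qed

lemma search_minus_1_eq_Nil: "search (-1) = []"
  by code_simp

definition imaginary_forms :: "letter list list list" where
  "imaginary_forms = [[[Z,Z,Z,Z,Z,P],[Z,P,P,N,N,N],[P,Z,N,P,N,N],[P,N,Z,N,P,N],[N,P,N,Z,P,N],[N,N,P,P,Z,N]],
     [[Z,Z,Z,Z,Z,N],[Z,P,P,N,N,P],[P,Z,N,P,N,P],[P,N,Z,N,P,P],[N,P,N,Z,P,P],[N,N,P,P,Z,P]],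
     [[Z,Z,P,P,P,N],[Z,P,Z,P,N,P],[P,Z,Z,N,P,P],[P,P,N,Z,Z,N],[P,N,P,Z,N,Z],[N,P,P,N,Z,Z]],
     [[Z,Z,P,P,N,N],[Z,P,Z,N,P,N],[Z,P,N,Z,N,P],[Z,N,P,N,Z,P],[Z,N,N,P,P,Z],[P,N,N,N,N,N]],
     [[Z,Z,P,P,N,N],[Z,P,Z,N,P,N],[Z,P,N,Z,N,P],[Z,N,P,N,Z,P],[Z,N,N,P,P,Z],[N,P,P,P,P,P]],
     [[Z,Z,P,P,N,N],[Z,P,Z,N,P,N],[P,Z,Z,N,N,P],[P,N,N,Z,Z,N],[N,P,N,Z,N,Z],[N,N,P,N,Z,Z]],
     [[Z,Z,P,P,N,N],[Z,N,P,N,Z,P],[P,P,Z,Z,N,P],[P,N,Z,P,P,Z],[N,Z,N,P,Z,P],[N,P,P,Z,P,Z]],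
     [[Z,Z,P,N,N,N],[Z,N,N,Z,P,N],[P,N,Z,N,Z,P],[N,Z,N,Z,N,P],[N,P,Z,N,P,Z],[N,N,P,P,Z,Z]],
     [[Z,P,P,P,P,P],[P,Z,P,P,N,N],[P,P,Z,N,P,N],[P,P,N,Z,N,P],[P,N,P,N,Z,P],[P,N,N,P,P,Z]],
     [[Z,P,P,P,P,N],[P,Z,P,P,N,P],[P,P,Z,N,P,P],[P,P,N,Z,N,N],[P,N,P,N,Z,N],[N,P,P,N,N,Z]],
     [[Z,P,P,P,P,N],[P,Z,P,P,N,P],[P,P,Z,N,N,N],[P,P,N,Z,P,P],[P,N,N,P,Z,N],[N,P,N,P,N,Z]],
     [[Z,P,P,P,P,N],[P,Z,P,N,N,N],[P,P,Z,P,N,P],[P,N,P,Z,P,P],[P,N,N,P,Z,N],[N,N,P,P,N,Z]],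
     [[Z,P,P,P,N,N],[P,Z,P,P,P,P],[P,P,Z,N,P,N],[P,P,N,Z,N,P],[N,P,P,N,Z,P],[N,P,N,P,P,Z]],
     [[Z,P,P,P,N,N],[P,Z,P,N,P,N],[P,P,Z,P,P,P],[P,N,P,Z,N,P],[N,P,P,N,Z,P],[N,N,P,P,P,Z]],
     [[Z,P,P,P,N,N],[P,Z,P,N,P,N],[P,P,Z,N,N,P],[P,N,N,Z,N,N],[N,P,N,N,Z,N],[N,N,P,N,N,Z]],
     [[Z,P,P,P,N,N],[P,Z,N,N,N,N],[P,N,Z,P,P,N],[P,N,P,Z,N,P],[N,N,P,N,Z,N],[N,N,N,P,N,Z]],
     [[Z,P,P,N,N,N],[P,Z,P,P,P,N],[P,P,Z,P,N,P],[N,P,P,Z,P,P],[N,P,N,P,Z,N],[N,N,P,P,N,Z]],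
     [[Z,P,P,N,N,N],[P,Z,N,P,N,N],[P,N,Z,N,P,N],[N,P,N,Z,P,N],[N,N,P,P,Z,N],[N,N,N,N,N,Z]],
     [[Z,P,N,N,N,N],[P,Z,P,P,N,N],[N,P,Z,P,P,N],[N,P,P,Z,N,P],[N,N,P,N,Z,N],[N,N,N,P,N,Z]],
     [[Z,N,N,N,N,N],[N,Z,P,P,N,N],[N,P,Z,N,P,N],[N,P,N,Z,N,P],[N,N,P,N,Z,P],[N,N,N,P,P,Z]]]"

lemma set_search_0_subset: "set (search 0) \<subseteq> set imaginary_forms"
  by code_simp

lemma no_normal_form_minus_1: "\<not> normal_form (-1) R"
  using normal_form_in_search search_minus_1_eq_Nil by fastforce

lemma normal_form_0_imaginary: "normal_form 0 R \<Longrightarrow> R \<in> set imaginary_forms"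
  using normal_form_in_search set_search_0_subset by blast

section \<open>Existence of normal forms\<close>

definition row_word :: "(6 \<Rightarrow> 6 \<Rightarrow> letter) \<Rightarrow> nat \<Rightarrow> letter list" where
  "row_word K k = map (K (enum6 ! k)) enum6"

definition column_word :: "(6 \<Rightarrow> 6 \<Rightarrow> letter) \<Rightarrow> nat \<Rightarrow> letter list" where
  "column_word K j = map (\<lambda>u. K u (enum6 ! j)) enum6"

definition letter_key :: "(6 \<Rightarrow> 6 \<Rightarrow> letter) \<Rightarrow> letter list" where
  "letter_key K = map (\<lambda>q. K (enum6 ! (q div 6)) (enum6 ! (q mod 6))) [0..<36]"

lemma length_row_word [simp]: "length (row_word K k) = 6"
  and length_column_word [simp]: "length (column_word K j) = 6"
  by (simp_all add: row_word_def column_word_def)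

lemma row_word_nth [simp]: "t < 6 \<Longrightarrow> row_word K k ! t = K (enum6 ! k) (enum6 ! t)"
  and column_word_nth [simp]: "t < 6 \<Longrightarrow> column_word K j ! t = K (enum6 ! t) (enum6 ! j)"
  by (simp_all add: row_word_def column_word_def)

definition word_matrix :: "(6 \<Rightarrow> 6 \<Rightarrow> letter) \<Rightarrow> letter list list" where
  "word_matrix K = map (row_word K) [0..<6]"

lemma length_word_matrix [simp]: "length (word_matrix K) = 6"
  by (simp add: word_matrix_def)

lemma word_matrix_row: "k < 6 \<Longrightarrow> word_matrix K ! k = row_word K k"
  by (simp add: word_matrix_def)

lemma word_matrix_column: "j < 6 \<Longrightarrow> column j (word_matrix K) = column_word K j"
proof -
  assume "j < 6"
  then have "column j (word_matrix K) = map (\<lambda>u. K u (enum6 ! j)) (map ((!) enum6) [0..<6])"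
    by (simp add: word_matrix_def column_def)
  also have "map ((!) enum6) [0..<6] = enum6"
    by (metis length_enum6 map_nth)
  finally show ?thesis
    by (simp add: column_word_def)
qed

lemma sum_list_zip_map:
  "(\<Sum>(x, y)\<leftarrow>zip (map f xs) (map g xs). F x y) = (\<Sum>j\<leftarrow>xs. F (f j) (g j))"
  by (induction xs) auto

lemma word_matrix_rows_inner:
  assumes "\<And>u v. letter_val a (K u v) = A u v" "k < 6" "l < 6"
  shows "(\<Sum>(x, y)\<leftarrow>zip (word_matrix K ! k) (word_matrix K ! l). letter_val a x * cnj (letter_val a y))
    = (\<Sum>v\<in>UNIV. A (enum6 ! k) v * cnj (A (enum6 ! l) v))"
  using assms by (simp add: word_matrix_row row_word_def sum_list_zip_map sum_UNIV_6)

lemma word_matrix_columns_inner: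
  assumes "\<And>u v. letter_val a (K u v) = A u v" "j < 6" "l < 6"
  shows "(\<Sum>(x, y)\<leftarrow>zip (column j (word_matrix K)) (column l (word_matrix K)).
      letter_val a x * cnj (letter_val a y))
    = (\<Sum>u\<in>UNIV. A u (enum6 ! j) * cnj (A u (enum6 ! l)))"
  using assms by (simp add: word_matrix_column column_word_def sum_list_zip_map sum_UNIV_6)

lemma letter_key_nth: "r < 6 \<Longrightarrow> c < 6 \<Longrightarrow> letter_key K ! (6 * r + c) = K (enum6 ! r) (enum6 ! c)"
  by (simp add: letter_key_def)

lemma letter_key_less:
  assumes rc: "r < 6" "c < 6"
    and before: "\<And>r' c'. r' < 6 \<Longrightarrow> c' < 6 \<Longrightarrow> 6 * r' + c' < 6 * r + c \<Longrightarrow>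
      K' (enum6 ! r') (enum6 ! c') = K (enum6 ! r') (enum6 ! c')"
    and at: "K' (enum6 ! r) (enum6 ! c) < K (enum6 ! r) (enum6 ! c)"
  shows "lex_less (letter_key K') (letter_key K)"
proof -
  have "letter_key K' ! q = letter_key K ! q" if "q < 6 * r + c" for q
    using before[of "q div 6" "q mod 6"] that rc by (simp add: letter_key_def)
  moreover have "letter_key K' ! (6 * r + c) < letter_key K ! (6 * r + c)"
    using at rc by (simp add: letter_key_nth)
  moreover have "6 * r + c < 36"
    using rc by simp
  ultimately show ?thesis
    by (subst lexordp_same_length_iff) (auto simp: letter_key_def)
qed

lemma row_swap_key_less:
  assumes k: "k < 5" and less: "lex_less (row_word K (Suc k)) (row_word K k)"
  shows "lex_less (letter_key (\<lambda>u v. K (Transposition.transpose (enum6 ! k) (enum6 ! Suc k) u) v))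
    (letter_key K)"
proof -
  obtain i where i: "i < 6" "\<And>t. t < i \<Longrightarrow> K (enum6 ! Suc k) (enum6 ! t) = K (enum6 ! k) (enum6 ! t)"
    "K (enum6 ! Suc k) (enum6 ! i) < K (enum6 ! k) (enum6 ! i)"
    using less by (auto simp: lexordp_same_length_iff)
  have distinct: "enum6 ! r \<noteq> enum6 ! k" "enum6 ! r \<noteq> enum6 ! Suc k" if "r < k" for r
    using that k by (simp_all add: enum6_eq_iff)
  show ?thesis
  proof (rule letter_key_less[of k i])
    fix r c assume "r < 6" "c < 6" "6 * r + c < 6 * k + i"
    moreover from this have "r \<le> k"
      using i(1) by linarith
    ultimately have "r < k \<or> (r = k \<and> c < i)"
      by auto
    then show "K (Transposition.transpose (enum6 ! k) (enum6 ! Suc k) (enum6 ! r)) (enum6 ! c)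
      = K (enum6 ! r) (enum6 ! c)"
      using distinct i(2) by auto
  qed (use k i in auto)
qed

lemma column_swap_key_less:
  assumes j: "j < 5" and less: "lex_less (column_word K (Suc j)) (column_word K j)"
  shows "lex_less (letter_key (\<lambda>u v. K u (Transposition.transpose (enum6 ! j) (enum6 ! Suc j) v)))
    (letter_key K)"
proof -
  obtain r where r: "r < 6" "\<And>t. t < r \<Longrightarrow> K (enum6 ! t) (enum6 ! Suc j) = K (enum6 ! t) (enum6 ! j)"
    "K (enum6 ! r) (enum6 ! Suc j) < K (enum6 ! r) (enum6 ! j)"
    using less by (auto simp: lexordp_same_length_iff)
  have neq: "enum6 ! j \<noteq> enum6 ! Suc j"
    using j by (simp add: enum6_eq_iff)
  have distinct: "enum6 ! c \<noteq> enum6 ! j \<and> enum6 ! c \<noteq> enum6 ! Suc j"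
    if "c < 6" "c \<noteq> j" "c \<noteq> Suc j" for c
    using that j by (simp add: enum6_eq_iff)
  show ?thesis
  proof (rule letter_key_less[of r j])
    fix r' c assume "r' < 6" "c < 6" "6 * r' + c < 6 * r + j"
    moreover from this have "r' \<le> r"
      using j by linarith
    ultimately have "r' < r \<or> (r' = r \<and> c < j)"
      by auto
    then show "K (enum6 ! r') (Transposition.transpose (enum6 ! j) (enum6 ! Suc j) (enum6 ! c))
      = K (enum6 ! r') (enum6 ! c)"
      using neq distinct[of c] r(2)[of r'] \<open>c < 6\<close> by (cases "c = j \<or> c = Suc j") auto
  qed (use j r neq in auto)
qed

text \<open>Permuting rows and columns so that the key becomes lexicographically least sorts both
  the rows and the columns.\<close>

lemma exists_sorting_permutations:
  fixes K :: "6 \<Rightarrow> 6 \<Rightarrow> letter"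
  obtains s p where "bij s" "bij p"
    "\<And>k. k < 5 \<Longrightarrow> \<not> lex_less (row_word (\<lambda>u v. K (s u) (p v)) (Suc k)) (row_word (\<lambda>u v. K (s u) (p v)) k)"
    "\<And>j. j < 5 \<Longrightarrow>
      \<not> lex_less (column_word (\<lambda>u v. K (s u) (p v)) (Suc j)) (column_word (\<lambda>u v. K (s u) (p v)) j)"
proof -
  define key where "key = (\<lambda>(s, p). letter_key (\<lambda>u v. K (s u) (p v)))"
  define less :: "(((6 \<Rightarrow> 6) \<times> (6 \<Rightarrow> 6)) \<times> ((6 \<Rightarrow> 6) \<times> (6 \<Rightarrow> 6))) set"
    where "less = {(q', q). lex_less (key q') (key q)}"
  have "trans less"
    by (auto simp: less_def trans_def intro: lexordp_trans)
  moreover have "irrefl less"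
    by (simp add: less_def irrefl_def lexordp_irreflexive')
  ultimately have wf: "wf less"
    by (intro finite_acyclic_wf) (simp_all add: acyclic_irrefl trancl_id)
  have "(id, id) \<in> {(s, p). bij s \<and> bij p}"
    by simp
  from wfE_min[OF wf this] obtain q where q: "q \<in> {(s, p). bij s \<and> bij p}"
    and least: "\<And>q'. (q', q) \<in> less \<Longrightarrow> q' \<notin> {(s, p). bij s \<and> bij p}"
    by blast
  obtain s p where sp: "q = (s, p)" "bij s" "bij p"
    using q by blast
  show ?thesis
  proof (rule that[OF sp(2,3)]; rule notI)
    fix k assume "k < 5" "lex_less (row_word (\<lambda>u v. K (s u) (p v)) (Suc k)) (row_word (\<lambda>u v. K (s u) (p v)) k)"
    from row_swap_key_less[OF this]
    have "((s \<circ> Transposition.transpose (enum6 ! k) (enum6 ! Suc k), p), q) \<in> less"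
      by (simp add: less_def key_def sp)
    moreover have "bij (s \<circ> Transposition.transpose (enum6 ! k) (enum6 ! Suc k))"
      using sp(2) by (simp add: bij_comp)
    ultimately show False
      using least sp(3) by blast
  next
    fix j assume "j < 5" "lex_less (column_word (\<lambda>u v. K (s u) (p v)) (Suc j)) (column_word (\<lambda>u v. K (s u) (p v)) j)"
    from column_swap_key_less[OF this]
    have "((s, p \<circ> Transposition.transpose (enum6 ! j) (enum6 ! Suc j)), q) \<in> less"
      by (simp add: less_def key_def sp)
    moreover have "bij (p \<circ> Transposition.transpose (enum6 ! j) (enum6 ! Suc j))"
      using sp(3) by (simp add: bij_comp)
    ultimately show False
      using least sp(2) by blast
  qed
qed

section \<open>Equivalence with \<open>H1\<close>\<close>

definition monomial_matrix :: "('n \<Rightarrow> 'n) \<Rightarrow> ('n \<Rightarrow> complex) \<Rightarrow> complex^'n^'n" where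
  "monomial_matrix f d = (\<chi> x y. if y = f x then d x else 0)"

lemma monomial_unitary_monomial_matrix:
  assumes "bij f" "\<And>x. norm (d x) = 1"
  shows "monomial_unitary (monomial_matrix f d)"
proof -
  have "d x \<noteq> 0" for x
    using assms(2)[of x] by auto
  moreover have "\<exists>!x. y = f x" for y
    using assms(1) by (metis bij_pointE)
  ultimately show ?thesis
    using assms(2) by (auto simp: monomial_unitary_def monomial_matrix_def)
qed

lemma monomial_unitary_transpose: "monomial_unitary (transpose M) \<longleftrightarrow> monomial_unitary M"
  by (auto simp: monomial_unitary_def transpose_def)

lemma monomial_matrix_mult_left: "(monomial_matrix f d ** A) $ x $ y = d x * A $ f x $ y"
proof -
  have "(monomial_matrix f d ** A) $ x $ y = (\<Sum>k\<in>UNIV. (if k = f x then d x else 0) * A $ k $ y)"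
    by (simp add: matrix_matrix_mult_def monomial_matrix_def)
  also have "\<dots> = (\<Sum>k\<in>UNIV. if k = f x then d x * A $ k $ y else 0)"
    by (rule sum.cong) simp_all
  finally show ?thesis
    by simp
qed

lemma monomial_matrix_mult_right:
  "(A ** transpose (monomial_matrix g e)) $ x $ y = A $ x $ g y * e y"
proof -
  have "(A ** transpose (monomial_matrix g e)) $ x $ y = (\<Sum>k\<in>UNIV. A $ x $ k * (if k = g y then e y else 0))"
    by (simp add: matrix_matrix_mult_def monomial_matrix_def transpose_def)
  also have "\<dots> = (\<Sum>k\<in>UNIV. if k = g y then A $ x $ k * e y else 0)"
    by (rule sum.cong) simp_all
  finally show ?thesis
    by simp
qed

lemma complex_equivalent_by_bijections:
  fixes H V :: "complex^'n^'n"
  assumes "bij s" "bij p" "bij \<sigma>" "bij \<tau>" "\<And>u. norm (d u) = 1" "\<And>v. norm (e v) = 1"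
    and entries: "\<And>u v. H $ s u $ p v = d u * V $ \<sigma> u $ \<tau> v * e v"
  shows "complex_equivalent H V"
proof -
  define L where "L = monomial_matrix (\<sigma> \<circ> inv s) (d \<circ> inv s)"
  define R where "R = transpose (monomial_matrix (\<tau> \<circ> inv p) (e \<circ> inv p))"
  have "monomial_unitary L" "monomial_unitary R"
    using assms(1-6) by (auto simp: L_def R_def monomial_unitary_transpose bij_imp_bij_inv
        intro!: monomial_unitary_monomial_matrix bij_comp)
  moreover have "H = L ** V ** R"
  proof -
    have "H $ x $ y = (L ** V ** R) $ x $ y" for x y
    proof -
      have "s (inv s x) = x" "p (inv p y) = y"
        using assms(1,2) by (simp_all add: bij_is_surj surj_f_inv_f)
      with entries[of "inv s x" "inv p y"] show ?thesis
        by (simp add: L_def R_def monomial_matrix_mult_left monomial_matrix_mult_right)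
    qed
    then show ?thesis
      by (simp add: vec_eq_iff)
  qed
  ultimately show ?thesis
    by (auto simp: complex_equivalent_def)
qed

definition matches_H1 :: "letter list list \<Rightarrow> nat list \<times> nat list \<times> complex list \<times> complex list \<Rightarrow> bool"
  where "matches_H1 R w \<longleftrightarrow> (case w of (\<sigma>, \<tau>, d, e) \<Rightarrow>
    length \<sigma> = 6 \<and> distinct \<sigma> \<and> list_all (\<lambda>k. k < 6) \<sigma> \<and>
    length \<tau> = 6 \<and> distinct \<tau> \<and> list_all (\<lambda>k. k < 6) \<tau> \<and>
    length d = 6 \<and> list_all (\<lambda>z. norm z = 1) d \<and> length e = 6 \<and> list_all (\<lambda>z. norm z = 1) e \<and>
    list_all (\<lambda>k. list_all (\<lambda>l. letter_val \<i> (R ! k ! l) = d ! k * H1_list ! (\<sigma> ! k) ! (\<tau> ! l) * e ! l)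
      [0..<6]) [0..<6])"

definition H1_witnesses :: "(nat list \<times> nat list \<times> complex list \<times> complex list) list" where
  "H1_witnesses =
    [([5, 0, 1, 2, 3, 4], [0, 1, 2, 3, 4, 5], [1, -\<i>, \<i>, \<i>, -\<i>, -\<i>], [1, -1, -1, 1, 1, 1]),
     ([5, 0, 1, 2, 3, 4], [0, 1, 2, 3, 4, 5], [1, -\<i>, \<i>, \<i>, -\<i>, -\<i>], [1, -1, -1, 1, 1, -1]),
     ([2, 1, 0, 3, 4, 5], [0, 1, 2, 5, 4, 3], [1, 1, 1, \<i>, \<i>, -\<i>], [1, 1, 1, -\<i>, \<i>, \<i>]),
     ([1, 4, 5, 3, 2, 0], [0, 1, 4, 5, 3, 2], [1, 1, 1, 1, 1, 1], [1, -\<i>, -\<i>, -\<i>, -\<i>, -\<i>]),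
     ([1, 4, 5, 3, 2, 0], [0, 1, 4, 5, 3, 2], [1, 1, 1, 1, 1, -1], [1, -\<i>, -\<i>, -\<i>, -\<i>, -\<i>]),
     ([2, 1, 0, 5, 4, 3], [0, 1, 2, 3, 4, 5], [1, 1, 1, \<i>, -\<i>, -\<i>], [1, 1, 1, -\<i>, -\<i>, \<i>]),
     ([4, 1, 5, 3, 0, 2], [0, 1, 2, 3, 4, 5], [1, 1, \<i>, \<i>, -1, -\<i>], [1, -1, \<i>, -\<i>, -1, -\<i>]),
     ([5, 1, 3, 0, 2, 4], [0, 1, 4, 5, 2, 3], [1, 1, \<i>, -1, -\<i>, -\<i>], [1, -1, \<i>, -1, \<i>, -\<i>]),
     ([0, 1, 4, 5, 3, 2], [0, 1, 4, 5, 3, 2], [1, -1, -1, -1, -1, -1], [-\<i>, \<i>, \<i>, \<i>, \<i>, \<i>]),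
     ([0, 1, 4, 5, 3, 2], [0, 1, 4, 5, 3, 2], [1, -1, -1, -1, -1, 1], [-\<i>, \<i>, \<i>, \<i>, \<i>, -\<i>]),
     ([0, 1, 4, 5, 2, 3], [0, 1, 4, 5, 2, 3], [1, -1, -1, -1, -1, 1], [-\<i>, \<i>, \<i>, \<i>, \<i>, -\<i>]),
     ([0, 1, 4, 3, 2, 5], [0, 1, 4, 3, 2, 5], [1, -1, -1, -1, -1, 1], [-\<i>, \<i>, \<i>, \<i>, \<i>, -\<i>]),
     ([0, 1, 4, 5, 2, 3], [0, 1, 4, 5, 2, 3], [1, -1, -1, -1, 1, 1], [-\<i>, \<i>, \<i>, \<i>, -\<i>, -\<i>]),
     ([0, 1, 4, 3, 2, 5], [0, 1, 4, 3, 2, 5], [1, -1, -1, -1, 1, 1], [-\<i>, \<i>, \<i>, \<i>, -\<i>, -\<i>]),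
     ([0, 1, 4, 2, 3, 5], [0, 1, 4, 2, 3, 5], [1, -1, -1, -1, 1, 1], [-\<i>, \<i>, \<i>, \<i>, -\<i>, -\<i>]),
     ([0, 1, 2, 3, 4, 5], [0, 1, 2, 3, 4, 5], [1, -1, -1, -1, 1, 1], [-\<i>, \<i>, \<i>, \<i>, -\<i>, -\<i>]),
     ([0, 1, 4, 2, 3, 5], [0, 1, 4, 2, 3, 5], [1, -1, -1, 1, 1, 1], [-\<i>, \<i>, \<i>, -\<i>, -\<i>, -\<i>]),
     ([0, 1, 2, 3, 4, 5], [0, 1, 2, 3, 4, 5], [1, -1, -1, 1, 1, 1], [-\<i>, \<i>, \<i>, -\<i>, -\<i>, -\<i>]),
     ([0, 1, 2, 3, 5, 4], [0, 1, 2, 3, 5, 4], [1, -1, 1, 1, 1, 1], [-\<i>, \<i>, -\<i>, -\<i>, -\<i>, -\<i>]),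
     ([0, 1, 4, 5, 3, 2], [0, 1, 4, 5, 3, 2], [1, 1, 1, 1, 1, 1], [-\<i>, -\<i>, -\<i>, -\<i>, -\<i>, -\<i>])]"

lemma imaginary_forms_match_H1: "list_all2 matches_H1 imaginary_forms H1_witnesses"
  unfolding imaginary_forms_def H1_witnesses_def list_all2_Cons list_all2_Nil
  by (intro conjI TrueI) (simp_all add: matches_H1_def H1_list_def upt_rec)

lemma bij_index_permutation:
  assumes "length \<sigma> = 6" "distinct \<sigma>" "list_all (\<lambda>k. k < 6) \<sigma>"
  shows "bij (\<lambda>u :: 6. enum6 ! (\<sigma> ! index6 u))"
proof -
  have less: "\<sigma> ! index6 u < 6" for u
    using assms(1,3) index6_less by (simp add: list_all_length)
  have "inj (\<lambda>u :: 6. enum6 ! (\<sigma> ! index6 u))"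
  proof (rule injI)
    fix u v :: 6
    assume "enum6 ! (\<sigma> ! index6 u) = enum6 ! (\<sigma> ! index6 v)"
    then have "index6 u = index6 v"
      using less assms(1,2) index6_less by (simp add: enum6_eq_iff nth_eq_iff_index_eq)
    then show "u = v"
      by (metis enum6_index6)
  qed
  then show ?thesis
    by (simp add: bij_def finite_UNIV_inj_surj)
qed

lemma matches_H1_equivalent:
  fixes H :: "complex^6^6"
  assumes match: "matches_H1 R (\<sigma>, \<tau>, d, e)" and "bij s" "bij p"
    and H: "\<And>k l. k < 6 \<Longrightarrow> l < 6 \<Longrightarrow> H $ s (enum6 ! k) $ p (enum6 ! l) = letter_val \<i> (R ! k ! l)"
  shows "complex_equivalent H H1"
proof (rule complex_equivalent_by_bijections[OF assms(2,3)])
  show "bij (\<lambda>u. enum6 ! (\<sigma> ! index6 u))" "bij (\<lambda>u. enum6 ! (\<tau> ! index6 u))"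
    using match by (auto simp: matches_H1_def intro: bij_index_permutation)
  show "norm (d ! index6 u) = 1" "norm (e ! index6 u) = 1" for u
    using match index6_less[of u] by (auto simp: matches_H1_def list_all_length)
  fix u v
  have "letter_val \<i> (R ! index6 u ! index6 v) = d ! index6 u * H1_list ! (\<sigma> ! index6 u) ! (\<tau> ! index6 v) * e ! index6 v"
    using match index6_less[of u] index6_less[of v] by (simp add: matches_H1_def list_all_iff)
  moreover have "\<sigma> ! index6 u < 6" "\<tau> ! index6 v < 6"
    using match index6_less by (auto simp: matches_H1_def list_all_length)
  ultimately show "H $ s u $ p v
    = d ! index6 u * H1 $ (enum6 ! (\<sigma> ! index6 u)) $ (enum6 ! (\<tau> ! index6 v)) * e ! index6 v"
    using H[of "index6 u" "index6 v"] index6_less by (simp add: H1_index6)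
qed

lemma normal_formI:
  assumes length: "length R = 6" "\<And>i. i < 6 \<Longrightarrow> length (R ! i) = 6"
    and rows_sorted: "\<And>k. k < 5 \<Longrightarrow> \<not> lex_less (R ! Suc k) (R ! k)"
    and rows_orth: "\<And>i j. i < j \<Longrightarrow> j < 6 \<Longrightarrow> orth_pattern m (R ! i) (R ! j)"
    and columns: "columns_sorted R" "columns_orthogonal m R"
  shows "normal_form m R"
proof -
  have step: "lex_less (R ! k) (R ! Suc k)" if "k < 5" for k
  proof -
    have "R ! k \<noteq> R ! Suc k"
    proof
      assume "R ! k = R ! Suc k"
      with rows_orth[of k "Suc k"] that have "orth_pattern m (R ! k) (R ! k)"
        by simp
      moreover have "R ! k \<noteq> []"
        using length(2)[of k] that by auto
      ultimately show False
        using not_orth_pattern_self by blast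
    qed
    with rows_sorted[OF that] show ?thesis
      using lexordp_linear by blast
  qed
  have "lex_less (R ! i) (R ! j)" if "i < j" "j < 6" for i j
    using that
  proof (induction j)
    case (Suc j)
    show ?case
    proof (cases "i = j")
      case True
      with Suc.prems step[of j] show ?thesis
        by simp
    next
      case False
      with Suc have "lex_less (R ! i) (R ! j)"
        by simp
      with step[of j] Suc.prems show ?thesis
        using lexordp_trans by auto
    qed
  qed simp
  with assms show ?thesis
    by (simp add: normal_form_def compatible_def)
qed

lemma unimodular_sign_choice:
  assumes "norm a = 1"
  obtains b where "norm b = 1" "{1, a, -a} = {1, b, -b}" "b = \<i> \<or> 0 < Re b"
proof -
  consider "0 < Re a" | "Re a < 0" | "Re a = 0"
    by linarith
  then show thesis
  proof cases
    case 1
    show thesis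
      by (rule that[of a]) (use assms 1 in auto)
  next
    case 2
    show thesis
      by (rule that[of "-a"]) (use assms 2 in auto)
  next
    case 3
    with assms have "\<bar>Im a\<bar> = 1"
      by (simp add: cmod_def)
    with 3 have "a = \<i> \<or> a = -\<i>"
      by (auto simp: complex_eq_iff abs_if split: if_splits)
    show thesis
      by (rule that[of \<i>]) (use \<open>a = \<i> \<or> a = -\<i>\<close> in auto)
  qed
qed

lemma hadamard_letter_normal_form:
  fixes H :: "complex^6^6"
  assumes hadamard: "complex_hadamard H" and entries: "\<forall>i j. H $ i $ j \<in> {1, a, -a}"
    and a: "norm a = 1" "Im a \<noteq> 0"
  obtains s p R where "bij s" "bij p"
    "\<And>m. m = slope (Re a) \<or> Re a \<notin> {0, 1/2, -1/2} \<Longrightarrow> normal_form m R"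
    "\<And>k l. k < 6 \<Longrightarrow> l < 6 \<Longrightarrow> H $ s (enum6 ! k) $ p (enum6 ! l) = letter_val a (R ! k ! l)"
proof -
  obtain s p where bij: "bij s" "bij p"
    and sorted: "\<And>k. k < 5 \<Longrightarrow> \<not> lex_less
        (row_word (\<lambda>u v. letter_of a (H $ s u $ p v)) (Suc k)) (row_word (\<lambda>u v. letter_of a (H $ s u $ p v)) k)"
      "\<And>j. j < 5 \<Longrightarrow> \<not> lex_less
        (column_word (\<lambda>u v. letter_of a (H $ s u $ p v)) (Suc j)) (column_word (\<lambda>u v. letter_of a (H $ s u $ p v)) j)"
    using exists_sorting_permutations[of "\<lambda>u v. letter_of a (H $ u $ v)"] by blast
  define K where "K = (\<lambda>u v. letter_of a (H $ s u $ p v))"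
  have val: "letter_val a (K u v) = H $ s u $ p v" for u v
    unfolding K_def using entries a(2) by (intro letter_val_of) auto
  have distinct: "f (enum6 ! k) \<noteq> f (enum6 ! l)" if "bij f" "k < 6" "l < 6" "k \<noteq> l" for f :: "6 \<Rightarrow> 6" and k l
    using that by (simp add: bij_is_inj inj_eq enum6_eq_iff)
  have rows: "(\<Sum>(x, y)\<leftarrow>zip (word_matrix K ! k) (word_matrix K ! l). letter_val a x * cnj (letter_val a y)) = 0"
    if "k < 6" "l < 6" "k \<noteq> l" for k l
    using complex_hadamard_rows_orthogonal[OF hadamard distinct[OF bij(1) that]]
      sum.reindex_bij_betw[OF bij(2), of "\<lambda>v. H $ s (enum6 ! k) $ v * cnj (H $ s (enum6 ! l) $ v)"]
    by (simp add: word_matrix_rows_inner[OF val] that)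
  have columns: "(\<Sum>(x, y)\<leftarrow>zip (column j (word_matrix K)) (column l (word_matrix K)).
      letter_val a x * cnj (letter_val a y)) = 0"
    if "j < 6" "l < 6" "j \<noteq> l" for j l
    using complex_hadamard_columns_orthogonal[OF hadamard distinct[OF bij(2) that]]
      sum.reindex_bij_betw[OF bij(1), of "\<lambda>u. H $ u $ p (enum6 ! j) * cnj (H $ u $ p (enum6 ! l))"]
    by (simp add: word_matrix_columns_inner[OF val] that)
  have "normal_form m (word_matrix K)" if m: "m = slope (Re a) \<or> Re a \<notin> {0, 1/2, -1/2}" for m
  proof (rule normal_formI)
    show "\<not> lex_less (word_matrix K ! Suc k) (word_matrix K ! k)" if "k < 5" for k
      using sorted(1)[OF that] that by (simp add: word_matrix_row K_def)
    show "columns_sorted (word_matrix K)"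
      using sorted(2) by (simp add: columns_sorted_def word_matrix_column K_def)
    show "orth_pattern m (word_matrix K ! k) (word_matrix K ! l)" if "k < l" "l < 6" for k l
      using orth_pattern_of_orthogonal[OF rows _ _ a m] that by (simp add: word_matrix_row)
    show "columns_orthogonal m (word_matrix K)"
      using orth_pattern_of_orthogonal[OF columns _ _ a m]
      by (simp add: columns_orthogonal_def word_matrix_column)
  qed (simp_all add: word_matrix_row)
  moreover have "H $ s (enum6 ! k) $ p (enum6 ! l) = letter_val a (word_matrix K ! k ! l)"
    if "k < 6" "l < 6" for k l
    using that by (simp add: word_matrix_row val)
  ultimately show thesis
    using that bij by blast
qed

lemma imaginary_form_matches_H1:
  assumes "R \<in> set imaginary_forms"
  obtains \<sigma> \<tau> d e where "matches_H1 R (\<sigma>, \<tau>, d, e)"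
  using imaginary_forms_match_H1 assms by (metis in_set_conv_nth list_all2_conv_all_nth prod_cases4)

theorem mainTheorem6:
  fixes a :: complex and H :: "complex^6^6"
  assumes "norm a = 1"
    and "complex_hadamard H"
    and "\<forall>i j. H $ i $ j \<in> {1, a, -a}"
  shows "complex_equivalent H H1"
proof -
  obtain b where b: "norm b = 1" "{1, a, -a} = {1, b, -b}" "b = \<i> \<or> 0 < Re b"
    using unimodular_sign_choice[OF assms(1)] .
  have entries: "\<forall>i j. H $ i $ j \<in> {1, b, -b}"
    using assms(3) b(2) by simp
  have "Im b \<noteq> 0"
  proof
    assume "Im b = 0"
    with b(1,3) have "b = 1"
      by (auto simp: complex_eq_iff cmod_def)
    with entries have "\<forall>i j. H $ i $ j \<in> {1, -1}"
      by simp
    from real_hadamard_order_dvd[OF assms(2) this] show False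
      by simp
  qed
  then obtain s p R where bij: "bij s" "bij p"
    and R: "\<And>m. m = slope (Re b) \<or> Re b \<notin> {0, 1/2, -1/2} \<Longrightarrow> normal_form m R"
    and H: "\<And>k l. k < 6 \<Longrightarrow> l < 6 \<Longrightarrow> H $ s (enum6 ! k) $ p (enum6 ! l) = letter_val b (R ! k ! l)"
    using hadamard_letter_normal_form[OF assms(2) entries b(1)] by blast
  have "b = \<i>"
    using R[of "-1"] b(3) no_normal_form_minus_1 by (cases "Re b = 1/2") (auto simp: slope_def)
  with R[of 0] have "R \<in> set imaginary_forms"
    by (intro normal_form_0_imaginary) (simp add: slope_def)
  then obtain \<sigma> \<tau> d e where "matches_H1 R (\<sigma>, \<tau>, d, e)"
    by (rule imaginary_form_matches_H1)
  from matches_H1_equivalent[OF this bij] H \<open>b = \<i>\<close> show ?thesis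
    by blast
qed

end
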